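(* Let $p\in(1,2)$, let $h=h(r)$ satisfy $h/r^{p/(p-1)}\to0$ as $r\to0^+$, and let $\phi(x)=|x|^\beta$ on $\mathbb{R}^d$ with $\beta>p/(p-1)$. Then \[ \lim_{r\to0,\ x\to0}\Delta_p^h\phi(x)=0 . \]
   Context: $J_p(t)=|t|^{p-2}t$ ($J_p(0)=0$); $B_r$ open ball of radius $r$ at $0$; $\omega_d=|B_1|$; $D_{d,p}=\frac{d}{2(d+p)}\fint_{\partial B_1}|y_1|^p\,d\sigma(y)$; $\mathcal G_h=h\mathbb Z^d=\{y_\alpha=h\alpha:\alpha\in\mathbb Z^d\}$; and \[ \Delta_p^h\phi(x):=\frac{h^d}{D_{d,p}\,\omega_d\,r^{p+d}}\sum_{y_\alpha\in\mathcal G_h\cap B_r}J_p\big(\phi(x+y_\alpha)-\phi(x)\big). \] *)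

theory Defs
  imports "HOL-Analysis.Analysis"
begin

definition Jp :: "real \<Rightarrow> real \<Rightarrow> real" where
  "Jp p t = (if t = 0 then 0 else \<bar>t\<bar> powr (p - 2) * t)"

definition omega :: "'n::finite itself \<Rightarrow> real" where
  "omega _ = measure lborel (ball (0::real^'n) 1)"

text \<open>Spherical average of |y_1|^p over the unit sphere of R^d, d = CARD('n).
  Since no surface measure is available, it is expressed through polar coordinates:
  int_{B_1} |y_1|^p dy = |dB_1| / (d+p) * avg_{dB_1} |y_1|^p and |dB_1| = d omega_d.
  The "first coordinate" is a fixed (arbitrary) coordinate index; by symmetry the
  value does not depend on the choice.\<close>
definition sphere_avg_pow :: "'n::finite itself \<Rightarrow> real \<Rightarrow> real" where
  "sphere_avg_pow T p =
     (real CARD('n) + p) / (real CARD('n) * omega T) *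
       integral (ball (0::real^'n) 1) (\<lambda>y. \<bar>y $ (SOME i::'n. True)\<bar> powr p)"

definition Ddp :: "'n::finite itself \<Rightarrow> real \<Rightarrow> real" where
  "Ddp T p = real CARD('n) / (2 * (real CARD('n) + p)) * sphere_avg_pow T p"

definition grid :: "real \<Rightarrow> (real^'n) set" where
  "grid h = {y. \<forall>i. \<exists>k::int. y $ i = h * of_int k}"

definition discrete_pLap ::
  "real \<Rightarrow> real \<Rightarrow> real \<Rightarrow> (real^'n \<Rightarrow> real) \<Rightarrow> real^'n \<Rightarrow> real" where
  "discrete_pLap p h r \<phi> x =
     h ^ CARD('n) / (Ddp TYPE('n) p * omega TYPE('n) * r powr (p + real CARD('n))) *
       (\<Sum>y \<in> grid h \<inter> ball 0 r. Jp p (\<phi> (x + y) - \<phi> x))"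

end

theory Submission
  imports Defs
begin

(*
  Let gamma = (beta - 1)(p - 1) > 1 and theta = (gamma + 1) / (2 gamma) < 1.

  Near the centre, |x| <= r^theta, each of the O((r/h)^d) terms of the lattice sum is at
  most (beta (|x| + r)^(beta-1) r)^(p-1) <= C r^(gamma theta + p - 1), so the normalised sum
  is O(r^((gamma-1)/2)).

  Away from the centre, 2r <= |x|, write a(y) = |x+y|^beta - |x|^beta. By Taylor,
  a(y) = g.y + O(E) with g the gradient of |.|^beta at x and E = |x|^(beta-2) r^2. Since the
  lattice ball is symmetric, the sum of J_p(a(y)) is half the sum of J_p(a(y)) - J_p(-a(-y)),
  and both arguments are E-close to g.y. As J_p is (p-1)-Hoelder, and Lipschitz with
  constant O(|t|^(p-2)) away from 0, each such difference is O(min(E^(p-1), E |g.y|^(p-2))).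
  Along a lattice line in the direction of the largest coordinate of g the values g.y form
  an arithmetic progression, so the line sums are controlled by sum_k k^(p-2) = O(n^(p-1)).
  This gives the bound O(h r^(p-3) + |x|^(gamma-1)), and h r^(p-3) -> 0 because
  h = o(r^(p/(p-1))).
*)

section \<open>The function \<open>J\<^sub>p\<close>\<close>

lemma Jp_abs: "\<bar>Jp p t\<bar> = \<bar>t\<bar> powr (p - 1)"
proof (cases "t = 0")
  case False
  then have "\<bar>Jp p t\<bar> = \<bar>t\<bar> powr (p - 2) * \<bar>t\<bar>" by (simp add: Jp_def abs_mult)
  also have "\<dots> = \<bar>t\<bar> powr (p - 1)" using False by (simp add: powr_mult_base mult.commute)
  finally show ?thesis .
qed (simp add: Jp_def)

lemma Jp_minus: "Jp p (- t) = - Jp p t"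
  by (simp add: Jp_def)

lemma Jp_pos: "t > 0 \<Longrightarrow> Jp p t = t powr (p - 1)"
  using Jp_abs[of p t] by (simp add: Jp_def)

lemma Jp_diff_le_far_from_zero:
  assumes p: "1 < p" "p < 2" and E: "E > 0" and l: "2 * E \<le> l"
    and u: "\<bar>u - l\<bar> \<le> E" and v: "\<bar>v - l\<bar> \<le> E"
  shows "\<bar>Jp p u - Jp p v\<bar> \<le> 4 * E * l powr (p - 2)"
proof -
  have l0: "l > 0" using l E by simp
  have "(1/2) * (l / 2) powr (p - 2) \<le> 2 powr (p - 2) * (l / 2) powr (p - 2)"
    using p powr_mono[of "-1" "p - 2" 2] by (intro mult_right_mono) (auto simp: powr_minus)
  also have "\<dots> = l powr (p - 2)"
    using l0 by (simp add: powr_mult[symmetric])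
  finally have half: "(l / 2) powr (p - 2) \<le> 2 * l powr (p - 2)" by simp
  have "norm (u powr (p - 1) - v powr (p - 1)) \<le> 2 * l powr (p - 2) * norm (u - v)"
  proof (rule field_differentiable_bound[of "{l/2..}" "\<lambda>z. z powr (p - 1)" "\<lambda>t. (p - 1) * t powr (p - 1 - 1)"])
    fix t :: real assume "t \<in> {l/2..}"
    then have t: "l / 2 \<le> t" by simp
    then show "((\<lambda>z. z powr (p - 1)) has_field_derivative (p - 1) * t powr (p - 1 - 1)) (at t within {l/2..})"
      using l0 by (intro has_field_derivative_at_within[OF has_real_derivative_powr]) auto
    have "t powr (p - 2) \<le> (l / 2) powr (p - 2)"
      using t l0 p by (intro powr_mono2') auto
    then have "(p - 1) * t powr (p - 2) \<le> 1 * (2 * l powr (p - 2))"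
      using p half by (intro mult_mono) auto
    then show "norm ((p - 1) * t powr (p - 1 - 1)) \<le> 2 * l powr (p - 2)"
      using p by (simp add: abs_mult)
  qed (use u v l in auto)
  also have "\<dots> \<le> 2 * l powr (p - 2) * (2 * E)"
    using u v by (intro mult_left_mono) auto
  finally have "\<bar>u powr (p - 1) - v powr (p - 1)\<bar> \<le> 4 * E * l powr (p - 2)"
    by (simp add: mult_ac)
  moreover have "Jp p u = u powr (p - 1)" "Jp p v = v powr (p - 1)"
    using u v l E by (auto intro!: Jp_pos)
  ultimately show ?thesis by simp
qed

(* Majorant of |J_p u - J_p v| for u, v within E of t: near 0 both values are O(E^(p-1));
   away from 0 the derivative of J_p is O(|t|^(p-2)). *)
definition Jp_osc :: "real \<Rightarrow> real \<Rightarrow> real \<Rightarrow> real" where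
  "Jp_osc p E t = (if \<bar>t\<bar> < 2 * E then 6 * E powr (p - 1) else 4 * E * \<bar>t\<bar> powr (p - 2))"

lemma Jp_diff_le_osc:
  assumes p: "1 < p" "p < 2" and E: "E > 0"
    and u: "\<bar>u - t\<bar> \<le> E" and v: "\<bar>v - t\<bar> \<le> E"
  shows "\<bar>Jp p u - Jp p v\<bar> \<le> Jp_osc p E t"
proof (cases "\<bar>t\<bar> < 2 * E")
  case True
  have "\<bar>Jp p w\<bar> \<le> 3 * E powr (p - 1)" if "\<bar>w\<bar> \<le> 3 * E" for w
  proof -
    have "\<bar>Jp p w\<bar> \<le> (3 * E) powr (p - 1)"
      unfolding Jp_abs using that p by (intro powr_mono2) auto
    also have "\<dots> = 3 powr (p - 1) * E powr (p - 1)" using E by (simp add: powr_mult)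
    also have "\<dots> \<le> 3 powr 1 * E powr (p - 1)"
      using p by (intro mult_right_mono powr_mono) auto
    finally show ?thesis by simp
  qed
  then have "\<bar>Jp p u\<bar> \<le> 3 * E powr (p - 1)" "\<bar>Jp p v\<bar> \<le> 3 * E powr (p - 1)"
    using u v True by auto
  then show ?thesis using True by (simp add: Jp_osc_def)
next
  case False
  show ?thesis
  proof (cases "t > 0")
    case True
    then show ?thesis using Jp_diff_le_far_from_zero[OF p E _ u v] False by (simp add: Jp_osc_def)
  next
    case False
    have "\<bar>- u - - t\<bar> \<le> E" "\<bar>- v - - t\<bar> \<le> E" using u v by auto
    from Jp_diff_le_far_from_zero[OF p E _ this] False \<open>\<not> \<bar>t\<bar> < 2 * E\<close>
    have "\<bar>Jp p (- u) - Jp p (- v)\<bar> \<le> 4 * E * \<bar>t\<bar> powr (p - 2)" by simp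
    then show ?thesis using \<open>\<not> \<bar>t\<bar> < 2 * E\<close> by (simp add: Jp_osc_def Jp_minus)
  qed
qed

lemma Jp_osc_nonneg: "E > 0 \<Longrightarrow> 0 \<le> Jp_osc p E t"
  by (simp add: Jp_osc_def)

lemma Jp_osc_le_const:
  assumes p: "1 < p" "p < 2" and E: "E > 0"
  shows "Jp_osc p E t \<le> 6 * E powr (p - 1)"
proof (cases "\<bar>t\<bar> < 2 * E")
  case False
  have "\<bar>t\<bar> powr (p - 2) \<le> (2 * E) powr (p - 2)"
    using False p E by (intro powr_mono2') auto
  also have "\<dots> \<le> E powr (p - 2)"
    using p E powr_mono[of "p - 2" 0 2] by (simp add: powr_mult mult_right_le_one_le)
  finally have "E * \<bar>t\<bar> powr (p - 2) \<le> E * E powr (p - 2)" using E by simp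
  also have "\<dots> = E powr (p - 1)" using E by (simp add: powr_mult_base)
  finally have "E * \<bar>t\<bar> powr (p - 2) \<le> E powr (p - 1)" .
  moreover have "Jp_osc p E t = 4 * (E * \<bar>t\<bar> powr (p - 2))" using False by (simp add: Jp_osc_def)
  ultimately show ?thesis using powr_ge_zero[of E "p - 1"] by linarith
qed (simp add: Jp_osc_def)

lemma Jp_osc_le_powr:
  assumes p: "1 < p" "p < 2" and E: "E > 0" and t: "t \<noteq> 0"
  shows "Jp_osc p E t \<le> 12 * E * \<bar>t\<bar> powr (p - 2)"
proof (cases "\<bar>t\<bar> < 2 * E")
  case True
  have "E powr (p - 2) = 2 powr (2 - p) * (2 * E) powr (p - 2)"
    using E by (simp add: powr_mult powr_add[symmetric])
  also have "\<dots> \<le> 2 * \<bar>t\<bar> powr (p - 2)"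
    using True p t powr_mono[of "2 - p" 1 2] by (intro mult_mono powr_mono2') auto
  finally have "E * E powr (p - 2) \<le> E * (2 * \<bar>t\<bar> powr (p - 2))" using E by simp
  moreover have "E * E powr (p - 2) = E powr (p - 1)" using E by (simp add: powr_mult_base)
  ultimately show ?thesis using True by (simp add: Jp_osc_def)
qed (use E in \<open>simp add: Jp_osc_def\<close>)

section \<open>Sums of negative powers along lattice lines\<close>

lemma sum_powr_le_initial_segment:
  fixes q :: real
  assumes q: "q \<le> 0"
  shows "finite T \<Longrightarrow> 0 \<notin> T \<Longrightarrow> (\<Sum>j\<in>T. real j powr q) \<le> (\<Sum>i<card T. real (Suc i) powr q)"
proof (induction "card T" arbitrary: T)
  case (Suc n)
  define M where "M = Max T"
  have "T \<noteq> {}" using Suc.hyps(2) by auto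
  then have M: "M \<in> T" using Suc.prems by (simp add: M_def)
  have "T \<subseteq> {1..M}" using Suc.prems by (auto simp: M_def Suc_le_eq) (metis gr0I)
  then have "Suc n \<le> M" using card_mono[of "{1..M}" T] Suc.hyps(2) by simp
  then have "real M powr q \<le> real (Suc n) powr q" using q by (intro powr_mono2') auto
  moreover have "(\<Sum>j\<in>T - {M}. real j powr q) \<le> (\<Sum>i<n. real (Suc i) powr q)"
    using Suc.hyps Suc.prems M by (metis card_Diff_singleton diff_Suc_1 finite_Diff DiffD1)
  ultimately have "(\<Sum>j\<in>T - {M}. real j powr q) + real M powr q \<le> (\<Sum>i<Suc n. real (Suc i) powr q)"
    by simp
  then show ?case using Suc.prems Suc.hyps(2) M by (simp add: sum.remove)
qed simp

lemma sum_powr_lessThan_le: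
  assumes p: "1 < p" "p \<le> 2"
  shows "(\<Sum>i<n. real (Suc i) powr (p - 2)) \<le> real n powr (p - 1) / (p - 1)"
proof -
  have step: "(p - 1) * real (Suc i) powr (p - 2) \<le> real (Suc i) powr (p - 1) - real i powr (p - 1)" for i
  proof (cases "i = 0")
    case False
    have "((\<lambda>t. t powr (p - 1)) has_real_derivative (p - 1) * t powr (p - 1 - 1)) (at t)"
      if "real i \<le> t" for t
      using that False by (intro has_real_derivative_powr) auto
    then obtain z where z: "real i < z" "z < real (Suc i)"
      "real (Suc i) powr (p - 1) - real i powr (p - 1) = (real (Suc i) - real i) * ((p - 1) * z powr (p - 1 - 1))"
      using MVT2[of "real i" "real (Suc i)" "\<lambda>t. t powr (p - 1)" "\<lambda>t. (p - 1) * t powr (p - 1 - 1)"]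
      by auto
    have "real (Suc i) powr (p - 2) \<le> z powr (p - 2)"
      using z p False by (intro powr_mono2') auto
    then show ?thesis using z p by simp
  qed (use p in simp)
  have "(p - 1) * (\<Sum>i<n. real (Suc i) powr (p - 2)) \<le> (\<Sum>i<n. real (Suc i) powr (p - 1) - real i powr (p - 1))"
    unfolding sum_distrib_left by (intro sum_mono step)
  also have "\<dots> = real n powr (p - 1)"
    using sum_lessThan_telescope[of "\<lambda>i. real i powr (p - 1)" n] by simp
  finally show ?thesis using p by (simp add: field_simps)
qed

lemma sum_powr_inj_nat_le:
  assumes p: "1 < p" "p \<le> 2" and M: "finite M" "card M \<le> n"
    and g: "inj_on g M" "\<And>m. m \<in> M \<Longrightarrow> g m > 0"
  shows "(\<Sum>m\<in>M. real (g m) powr (p - 2)) \<le> real n powr (p - 1) / (p - 1)"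
proof -
  have "(\<Sum>m\<in>M. real (g m) powr (p - 2)) = (\<Sum>j\<in>g ` M. real j powr (p - 2))"
    using g by (simp add: sum.reindex)
  also have "\<dots> \<le> (\<Sum>i<card M. real (Suc i) powr (p - 2))"
    using sum_powr_le_initial_segment[of "p - 2" "g ` M"] p M g by (force simp: card_image)
  also have "\<dots> \<le> (\<Sum>i<n. real (Suc i) powr (p - 2))"
    using M by (intro sum_mono2) auto
  also have "\<dots> \<le> real n powr (p - 1) / (p - 1)"
    by (rule sum_powr_lessThan_le[OF p])
  finally show ?thesis .
qed

lemma dist_round_ge:
  fixes w :: real
  assumes "m \<noteq> round w"
  shows "real (nat \<bar>m - round w\<bar>) / 2 \<le> \<bar>of_int m - w\<bar>" "1 \<le> nat \<bar>m - round w\<bar>"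
proof -
  have "1 \<le> \<bar>m - round w\<bar>" using assms by linarith
  then have "1 \<le> \<bar>of_int m - of_int (round w) :: real\<bar>" by (metis of_int_1_le_iff of_int_abs of_int_diff)
  moreover have "\<bar>of_int m - of_int (round w)\<bar> \<le> \<bar>of_int m - w\<bar> + \<bar>of_int (round w) - w\<bar>"
    using abs_triangle_ineq4[of "of_int m - w" "of_int (round w) - w"] by simp
  moreover have "\<bar>of_int (round w) - w\<bar> \<le> 1/2" by (rule of_int_round_abs_le)
  moreover have "real (nat \<bar>m - round w\<bar>) = \<bar>of_int m - of_int (round w)\<bar>" by (simp add: of_nat_nat)
  ultimately show "real (nat \<bar>m - round w\<bar>) / 2 \<le> \<bar>of_int m - w\<bar>" by linarith
  show "1 \<le> nat \<bar>m - round w\<bar>" using \<open>1 \<le> \<bar>m - round w\<bar>\<close> by linarith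
qed

lemma sum_lattice_line_le:
  fixes f :: "real \<Rightarrow> real"
  assumes p: "1 < p" "p < 2" and \<sigma>: "\<sigma> \<noteq> 0" and B: "B \<ge> 0"
    and f0: "\<And>t. 0 \<le> f t" and fA: "\<And>t. f t \<le> A"
    and fB: "\<And>t. t \<noteq> 0 \<Longrightarrow> f t \<le> B * \<bar>t\<bar> powr (p - 2)"
  shows "(\<Sum>m\<in>{- int N..int N}. f (c + \<sigma> * of_int m))
          \<le> A + 2 * B * (\<bar>\<sigma>\<bar> / 2) powr (p - 2) * real (2 * N + 1) powr (p - 1) / (p - 1)"
proof -
  define I where "I = {- int N..int N}"
  define k0 where "k0 = round (- c / \<sigma>)"
  define B' where "B' = B * (\<bar>\<sigma>\<bar> / 2) powr (p - 2)"
  define d where "d m = real (nat \<bar>m - k0\<bar>) powr (p - 2)" for m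
  have fin: "finite I" and cardI: "card I = 2 * N + 1" by (simp_all add: I_def)
  have "f (c + \<sigma> * of_int m) \<le> B' * d m" if m: "m \<noteq> k0" for m
  proof -
    have "\<bar>c + \<sigma> * of_int m\<bar> = \<bar>\<sigma>\<bar> * \<bar>of_int m - (- c / \<sigma>)\<bar>"
      using \<sigma> by (simp add: abs_mult[symmetric] algebra_simps)
    moreover have "real (nat \<bar>m - k0\<bar>) / 2 \<le> \<bar>of_int m - (- c / \<sigma>)\<bar>" "1 \<le> nat \<bar>m - k0\<bar>"
      using dist_round_ge[of m "- c / \<sigma>"] m by (auto simp: k0_def)
    ultimately have lb: "\<bar>\<sigma>\<bar> * (real (nat \<bar>m - k0\<bar>) / 2) \<le> \<bar>c + \<sigma> * of_int m\<bar>"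
      "0 < \<bar>\<sigma>\<bar> * (real (nat \<bar>m - k0\<bar>) / 2)"
      using \<sigma> by (auto intro: mult_left_mono)
    then have "f (c + \<sigma> * of_int m) \<le> B * \<bar>c + \<sigma> * of_int m\<bar> powr (p - 2)"
      by (intro fB) auto
    also have "\<dots> \<le> B * (\<bar>\<sigma>\<bar> * (real (nat \<bar>m - k0\<bar>) / 2)) powr (p - 2)"
      using lb p B by (intro mult_left_mono powr_mono2') auto
    also have "\<dots> = B' * d m"
      by (simp add: B'_def d_def powr_mult[symmetric] mult_ac)
    finally show ?thesis .
  qed
  then have pt: "f (c + \<sigma> * of_int m) \<le> (if m = k0 then A else 0)
      + B' * (if k0 < m then d m else 0) + B' * (if m < k0 then d m else 0)" for m
    using fA[of "c + \<sigma> * of_int m"] by (cases "m = k0") auto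
  have side: "(\<Sum>m\<in>{m\<in>I. P m}. d m) \<le> real (2 * N + 1) powr (p - 1) / (p - 1)"
    if "\<And>m. P m \<Longrightarrow> m \<noteq> k0" "\<And>m m'. P m \<Longrightarrow> P m' \<Longrightarrow> \<bar>m - k0\<bar> = \<bar>m' - k0\<bar> \<Longrightarrow> m = m'"
    for P
    unfolding d_def using that fin p cardI card_mono[OF fin, of "{m\<in>I. P m}"]
    by (intro sum_powr_inj_nat_le) (auto simp: inj_on_def eq_nat_nat_iff)
  have "(\<Sum>m\<in>I. f (c + \<sigma> * of_int m)) \<le> (\<Sum>m\<in>I. (if m = k0 then A else 0))
      + B' * (\<Sum>m\<in>{m\<in>I. k0 < m}. d m) + B' * (\<Sum>m\<in>{m\<in>I. m < k0}. d m)"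
    using sum_mono[of I _ "\<lambda>m. (if m = k0 then A else 0) + B' * (if k0 < m then d m else 0) + B' * (if m < k0 then d m else 0)", OF pt]
    by (simp add: sum.distrib sum_distrib_left sum.inter_filter[OF fin] if_distrib[of "(*) B'"] cong: if_cong)
  also have "\<dots> \<le> A + B' * (real (2 * N + 1) powr (p - 1) / (p - 1)) + B' * (real (2 * N + 1) powr (p - 1) / (p - 1))"
    using fin order_trans[OF f0 fA] side[of "\<lambda>m. k0 < m"] side[of "\<lambda>m. m < k0"] B
    by (intro add_mono mult_left_mono) (auto simp: sum.delta B'_def abs_eq_iff)
  finally show ?thesis by (simp add: I_def B'_def field_simps)
qed

section \<open>Lattice points in a ball\<close>

definition int_box :: "nat \<Rightarrow> ('n::finite \<Rightarrow> int) set" where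
  "int_box N = {k. \<forall>j. \<bar>k j\<bar> \<le> int N}"

definition lattice_point :: "real \<Rightarrow> ('n::finite \<Rightarrow> int) \<Rightarrow> real^'n" where
  "lattice_point h k = (\<chi> j. h * of_int (k j))"

lemma abs_le_int_iff: "\<bar>a\<bar> \<le> int N \<longleftrightarrow> a \<in> {- int N..int N}"
  by auto

lemma int_box_eq_PiE: "int_box N = PiE UNIV (\<lambda>_. {- int N..int N})"
  unfolding int_box_def PiE_UNIV_domain Pi_def abs_le_int_iff by auto

lemma finite_int_box: "finite (int_box N)"
  unfolding int_box_eq_PiE by (intro finite_PiE) auto

lemma card_int_box: "card (int_box N :: ('n::finite \<Rightarrow> int) set) = (2 * N + 1) ^ CARD('n)"
proof -
  have "nat (2 * int N + 1) = 2 * N + 1" by arith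
  then show ?thesis unfolding int_box_eq_PiE by (simp add: card_PiE)
qed

lemma card_int_box_slice:
  fixes i :: "'n::finite"
  shows "card {k \<in> int_box N. k i = 0} = (2 * N + 1) ^ (CARD('n) - 1)"
proof -
  have "{k \<in> int_box N. k i = 0} = PiE UNIV (\<lambda>j. if j = i then {0} else {- int N..int N})"
  proof (intro set_eqI iffI)
    fix k assume "k \<in> PiE UNIV (\<lambda>j. if j = i then {0} else {- int N..int N})"
    then have kj: "k j \<in> (if j = i then {0} else {- int N..int N})" for j
      by (auto simp: PiE_UNIV_domain Pi_iff)
    then have ki: "k i = 0" by (metis singletonD)
    have "k j \<in> {- int N..int N}" for j using kj[of j] ki by (cases "j = i") auto
    then show "k \<in> {k \<in> int_box N. k i = 0}" using ki by (simp add: int_box_def abs_le_int_iff)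
  qed (auto simp: int_box_def PiE_UNIV_domain abs_le_int_iff)
  then have "card {k \<in> int_box N. k i = 0}
      = (\<Prod>j\<in>(UNIV::'n set). card (if j = i then {0::int} else {- int N..int N}))"
    by (simp add: card_PiE)
  also have "\<dots> = (\<Prod>j\<in>(UNIV::'n set). if j = i then 1 else 2 * N + 1)"
    by (intro prod.cong) auto
  also have "\<dots> = (2 * N + 1) ^ (CARD('n) - 1)"
    by (simp add: prod.If_cases Diff_eq[symmetric] card_Diff_singleton)
  finally show ?thesis .
qed

lemma sum_int_box_split:
  fixes F :: "('n::finite \<Rightarrow> int) \<Rightarrow> real"
  shows "(\<Sum>k\<in>int_box N. F k) = (\<Sum>k\<in>{k \<in> int_box N. k i = 0}. \<Sum>m\<in>{- int N..int N}. F (k(i := m)))"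
proof -
  have "bij_betw (\<lambda>(k, m). k(i := m)) ({k \<in> int_box N. k i = 0} \<times> {- int N..int N}) (int_box N)"
    by (rule bij_betw_byWitness[where f' = "\<lambda>k. (k(i := 0), k i)"]) (auto simp: int_box_def abs_le_int_iff)
  then have "(\<Sum>k\<in>int_box N. F k) = (\<Sum>(k, m)\<in>{k \<in> int_box N. k i = 0} \<times> {- int N..int N}. F (k(i := m)))"
    by (simp add: sum.reindex_bij_betw[symmetric] case_prod_unfold)
  then show ?thesis by (simp add: sum.cartesian_product)
qed

lemma inner_lattice_point_upd:
  assumes "k i = 0"
  shows "inner g (lattice_point h (k(i := m))) = inner g (lattice_point h k) + h * g $ i * of_int m"
proof -
  have "inner g (lattice_point h (k(i := m)))
      = (\<Sum>j\<in>UNIV. g $ j * (h * of_int (k j)) + (if j = i then h * g $ i * of_int m else 0))"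
    unfolding inner_vec_def lattice_point_def using assms by (intro sum.cong) auto
  then show ?thesis by (simp add: sum.distrib inner_vec_def lattice_point_def)
qed

lemma grid_ball_subset_lattice_points:
  assumes h: "h > 0"
  shows "grid h \<inter> ball 0 r \<subseteq> lattice_point h ` int_box (nat \<lfloor>r / h\<rfloor>)"
proof
  fix y :: "real^'n" assume y: "y \<in> grid h \<inter> ball 0 r"
  then have "\<forall>j. \<exists>k::int. y $ j = h * of_int k" by (simp add: grid_def)
  then obtain k where k: "\<And>j. y $ j = h * of_int (k j)" by metis
  have "\<bar>k j\<bar> \<le> int (nat \<lfloor>r / h\<rfloor>)" for j
  proof -
    have "h * \<bar>of_int (k j)\<bar> < r"
      using y component_le_norm_cart[of y j] h k[of j] by (simp add: abs_mult)
    then have "\<bar>of_int (k j)\<bar> < r / h" using h by (simp add: field_simps)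
    then show ?thesis by linarith
  qed
  moreover have "y = lattice_point h k" by (simp add: lattice_point_def vec_eq_iff k)
  ultimately show "y \<in> lattice_point h ` int_box (nat \<lfloor>r / h\<rfloor>)" by (auto simp: int_box_def)
qed

lemma inj_lattice_point: "h \<noteq> 0 \<Longrightarrow> inj (lattice_point h :: _ \<Rightarrow> real^'n::finite)"
  by (auto simp: inj_def lattice_point_def vec_eq_iff)

lemma card_grid_ball_le:
  assumes "h > 0"
  shows "card (grid h \<inter> ball (0::real^'n::finite) r) \<le> (2 * nat \<lfloor>r / h\<rfloor> + 1) ^ CARD('n)"
proof -
  have "card (grid h \<inter> ball (0::real^'n) r) \<le> card (lattice_point h ` int_box (nat \<lfloor>r / h\<rfloor>) :: (real^'n) set)"
    using assms by (intro card_mono finite_imageI finite_int_box grid_ball_subset_lattice_points)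
  also have "\<dots> \<le> card (int_box (nat \<lfloor>r / h\<rfloor>) :: ('n \<Rightarrow> int) set)" by (rule card_image_le[OF finite_int_box])
  finally show ?thesis by (simp add: card_int_box)
qed

lemma grid_radius_scaled_le:
  assumes h: "0 < h" "h \<le> r"
  shows "h * real (2 * nat \<lfloor>r / h\<rfloor> + 1) \<le> 3 * r"
proof -
  have "0 \<le> \<lfloor>r / h\<rfloor>" using h by simp
  moreover have "h * real_of_int \<lfloor>r / h\<rfloor> \<le> h * (r / h)"
    using h by (intro mult_left_mono) simp_all
  ultimately show ?thesis using h by (simp add: distrib_left)
qed

lemma card_grid_ball_scaled_le:
  assumes h: "0 < h" "h \<le> r"
  shows "h ^ CARD('n) * real (card (grid h \<inter> ball (0::real^'n::finite) r)) \<le> (3 * r) ^ CARD('n)"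
proof -
  have "real (card (grid h \<inter> ball (0::real^'n) r)) \<le> real (2 * nat \<lfloor>r / h\<rfloor> + 1) ^ CARD('n)"
    using card_grid_ball_le[OF h(1), of r] by (metis of_nat_le_iff of_nat_power)
  then have "h ^ CARD('n) * real (card (grid h \<inter> ball (0::real^'n) r))
      \<le> h ^ CARD('n) * real (2 * nat \<lfloor>r / h\<rfloor> + 1) ^ CARD('n)"
    using h by (intro mult_left_mono) auto
  also have "\<dots> = (h * real (2 * nat \<lfloor>r / h\<rfloor> + 1)) ^ CARD('n)" by (simp add: power_mult_distrib)
  also have "\<dots> \<le> (3 * r) ^ CARD('n)" using grid_radius_scaled_le[OF h] h by (intro power_mono) auto
  finally show ?thesis .
qed

lemma sum_grid_ball_le_int_box:
  fixes G :: "real^'n::finite \<Rightarrow> real"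
  assumes h: "h > 0" and G: "\<And>y. 0 \<le> G y"
  shows "(\<Sum>y\<in>grid h \<inter> ball 0 r. G y) \<le> (\<Sum>k\<in>int_box (nat \<lfloor>r / h\<rfloor>). G (lattice_point h k))"
proof -
  have "(\<Sum>y\<in>grid h \<inter> ball 0 r. G y) \<le> (\<Sum>y\<in>lattice_point h ` int_box (nat \<lfloor>r / h\<rfloor>). G y)"
    using h G by (intro sum_mono2 finite_imageI finite_int_box grid_ball_subset_lattice_points) auto
  also have "\<dots> = (\<Sum>k\<in>int_box (nat \<lfloor>r / h\<rfloor>). G (lattice_point h k))"
    using sum.reindex[OF inj_on_subset[OF inj_lattice_point subset_UNIV], of h] h by simp
  finally show ?thesis .
qed

lemma uminus_in_grid_ball:
  "y \<in> grid h \<inter> ball 0 r \<Longrightarrow> - y \<in> grid h \<inter> ball (0::real^'n::finite) r"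
  unfolding grid_def by simp (metis mult_minus_right of_int_minus)

lemma sum_grid_ball_reflect:
  "(\<Sum>y\<in>grid h \<inter> ball (0::real^'n::finite) r. F (- y)) = (\<Sum>y\<in>grid h \<inter> ball 0 r. F y)"
  using uminus_in_grid_ball by (intro sum.reindex_bij_witness[of _ uminus uminus]) auto

section \<open>Second-order expansion of \<open>|x|\<^sup>\<beta>\<close>\<close>

lemma taylor_remainder_le:
  fixes f f' f'' :: "real \<Rightarrow> real"
  assumes S: "convex S" "a \<in> S" "b \<in> S"
    and f': "\<And>t. t \<in> S \<Longrightarrow> (f has_real_derivative f' t) (at t within S)"
    and f'': "\<And>t. t \<in> S \<Longrightarrow> (f' has_real_derivative f'' t) (at t within S)"
    and M: "\<And>t. t \<in> S \<Longrightarrow> \<bar>f'' t\<bar> \<le> M"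
  shows "\<bar>f b - f a - f' a * (b - a)\<bar> \<le> M * (b - a)\<^sup>2"
proof -
  have seg: "closed_segment a b \<subseteq> S" using S by (simp add: closed_segment_subset)
  have "\<bar>f' t - f' a\<bar> \<le> M * \<bar>b - a\<bar>" if t: "t \<in> closed_segment a b" for t
  proof -
    have "norm (f' t - f' a) \<le> M * norm (t - a)"
      using t seg S f'' M by (intro field_differentiable_bound[of S]) auto
    also have "\<dots> \<le> M * \<bar>b - a\<bar>"
      using dist_in_closed_segment[OF t] M[of a] S
      by (intro mult_left_mono) (auto simp: dist_real_def abs_minus_commute)
    finally show ?thesis by simp
  qed
  moreover have "((\<lambda>t. f t - f' a * t) has_real_derivative f' t - f' a) (at t within closed_segment a b)"
    if "t \<in> closed_segment a b" for t
    using has_field_derivative_subset[OF f' seg] that seg by (auto intro!: DERIV_diff)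
  ultimately have "norm ((f b - f' a * b) - (f a - f' a * a)) \<le> M * \<bar>b - a\<bar> * norm (b - a)"
    by (intro field_differentiable_bound[of "closed_segment a b" "\<lambda>t. f t - f' a * t"]) auto
  then show ?thesis by (simp add: algebra_simps power2_eq_square abs_mult_self_eq)
qed

lemma powr_le_on_interval:
  fixes a b t e :: real
  assumes "0 < a" "a \<le> t" "t \<le> b"
  shows "t powr e \<le> a powr e + b powr e"
proof (cases "e \<ge> 0")
  case True
  then have "t powr e \<le> b powr e" using assms by (intro powr_mono2) auto
  then show ?thesis using powr_ge_zero[of a e] by linarith
next
  case False
  then have "t powr e \<le> a powr e" using assms by (intro powr_mono2') auto
  then show ?thesis using powr_ge_zero[of b e] by linarith
qed

lemma power2_powr: "s > 0 \<Longrightarrow> (s\<^sup>2) powr b = s powr (2 * b)" for s b :: real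
  by (simp add: powr_powr[symmetric])

lemma powr_taylor_on_annulus:
  fixes s u b :: real
  assumes b: "b > 1" and s: "s > 0" and u: "s\<^sup>2 / 4 \<le> u" "u \<le> 9 * s\<^sup>2 / 4"
  shows "\<bar>u powr b - (s\<^sup>2) powr b - b * (s\<^sup>2) powr (b - 1) * (u - s\<^sup>2)\<bar>
           \<le> b * (b - 1) * ((1/4) powr (b - 2) + (9/4) powr (b - 2)) * s powr (2 * (b - 2)) * (u - s\<^sup>2)\<^sup>2"
proof (rule taylor_remainder_le[of "{s\<^sup>2/4..9 * s\<^sup>2/4}"])
  fix t assume "t \<in> {s\<^sup>2/4..9 * s\<^sup>2/4}"
  then have t: "s\<^sup>2 / 4 \<le> t" "t \<le> 9 * s\<^sup>2 / 4" by auto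
  have t0: "t > 0" using t s by (smt (verit) zero_less_power divide_pos_pos)
  show "((\<lambda>z. z powr b) has_real_derivative b * t powr (b - 1)) (at t within {s\<^sup>2/4..9 * s\<^sup>2/4})"
    using t0 by (intro has_field_derivative_at_within[OF has_real_derivative_powr])
  show "((\<lambda>z. b * z powr (b - 1)) has_real_derivative b * ((b - 1) * t powr (b - 1 - 1))) (at t within {s\<^sup>2/4..9 * s\<^sup>2/4})"
    using t0 by (intro has_field_derivative_at_within[OF DERIV_cmult[OF has_real_derivative_powr]])
  have "t powr (b - 2) \<le> (s\<^sup>2 / 4) powr (b - 2) + (9 * s\<^sup>2 / 4) powr (b - 2)"
    using t s by (intro powr_le_on_interval) auto
  also have "\<dots> = ((1/4) * s\<^sup>2) powr (b - 2) + ((9/4) * s\<^sup>2) powr (b - 2)" by simp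
  also have "\<dots> = ((1/4) powr (b - 2) + (9/4) powr (b - 2)) * s powr (2 * (b - 2))"
    unfolding powr_mult[of "1/4" "s\<^sup>2"] powr_mult[of "9/4" "s\<^sup>2"] using s
    by (simp add: power2_powr distrib_right)
  finally show "\<bar>b * ((b - 1) * t powr (b - 1 - 1))\<bar>
      \<le> b * (b - 1) * ((1/4) powr (b - 2) + (9/4) powr (b - 2)) * s powr (2 * (b - 2))"
    using b by (simp add: abs_mult mult_left_mono)
qed (use s u in auto)

lemma norm_add_sq_near:
  fixes x y :: "'a::real_inner"
  assumes y: "norm y \<le> norm x / 2"
  shows "(norm x)\<^sup>2 / 4 \<le> (norm (x + y))\<^sup>2" "(norm (x + y))\<^sup>2 \<le> 9 * (norm x)\<^sup>2 / 4"
    and "((norm (x + y))\<^sup>2 - (norm x)\<^sup>2)\<^sup>2 \<le> 9 * (norm x)\<^sup>2 * (norm y)\<^sup>2"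
proof -
  have "norm x / 2 \<le> norm (x + y)" "norm (x + y) \<le> 3 * norm x / 2"
    using norm_triangle_ineq2[of x "- y"] norm_triangle_ineq[of x y] y by simp_all
  then have "(norm x / 2)\<^sup>2 \<le> (norm (x + y))\<^sup>2" "(norm (x + y))\<^sup>2 \<le> (3 * norm x / 2)\<^sup>2"
    by (intro power_mono; simp)+
  then show "(norm x)\<^sup>2 / 4 \<le> (norm (x + y))\<^sup>2" "(norm (x + y))\<^sup>2 \<le> 9 * (norm x)\<^sup>2 / 4"
    by (simp_all add: power_divide power_mult_distrib)
  have "\<bar>inner x y\<bar> \<le> norm x * norm y" by (rule Cauchy_Schwarz_ineq2)
  moreover have "norm y \<le> norm x" using y norm_ge_zero[of y] by linarith
  then have "(norm y)\<^sup>2 \<le> norm x * norm y" unfolding power2_eq_square by (simp add: mult_right_mono)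
  moreover have "(norm (x + y))\<^sup>2 - (norm x)\<^sup>2 = 2 * inner x y + (norm y)\<^sup>2"
    by (simp add: power2_norm_eq_inner inner_add algebra_simps inner_commute)
  ultimately have "\<bar>(norm (x + y))\<^sup>2 - (norm x)\<^sup>2\<bar> \<le> 3 * norm x * norm y"
    using zero_le_power2[of "norm y"] by (simp only: abs_le_iff) linarith
  then show "((norm (x + y))\<^sup>2 - (norm x)\<^sup>2)\<^sup>2 \<le> 9 * (norm x)\<^sup>2 * (norm y)\<^sup>2"
    using power2_le_iff_abs_le[of "3 * norm x * norm y"] by (simp add: power_mult_distrib)
qed

lemma norm_powr_second_order:
  fixes \<beta> :: real
  assumes \<beta>: "\<beta> > 2"
  obtains K where "K > 0"
    and "\<And>x y :: 'a::real_inner. norm x > 0 \<Longrightarrow> norm y \<le> norm x / 2 \<Longrightarrow>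
      \<bar>norm (x + y) powr \<beta> - norm x powr \<beta> - \<beta> * norm x powr (\<beta> - 2) * inner x y\<bar>
        \<le> K * norm x powr (\<beta> - 2) * (norm y)\<^sup>2"
proof
  define b where "b = \<beta> / 2"
  define c where "c = b * (b - 1) * ((1/4) powr (b - 2) + (9/4) powr (b - 2))"
  have b: "b > 1" using \<beta> by (simp add: b_def)
  have c: "c \<ge> 0" using b by (simp add: c_def)
  show "9 * c + b > 0" using b c by simp
  fix x y :: 'a
  assume x: "norm x > 0" and y: "norm y \<le> norm x / 2"
  define s where "s = norm x"
  define u where "u = (norm (x + y))\<^sup>2"
  have s: "s > 0" using x by (simp add: s_def)
  note u = norm_add_sq_near[OF y, folded s_def u_def]
  then have "c * s powr (2 * (b - 2)) * (u - s\<^sup>2)\<^sup>2 \<le> c * s powr (2 * (b - 2)) * (9 * s\<^sup>2 * (norm y)\<^sup>2)"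
    using c by (intro mult_left_mono) auto
  also have "\<dots> = 9 * c * (s powr (2 * (b - 2)) * s powr 2) * (norm y)\<^sup>2"
    using s by (simp add: powr_numeral)
  also have "\<dots> = 9 * c * s powr (\<beta> - 2) * (norm y)\<^sup>2"
    by (simp add: powr_add[symmetric] b_def algebra_simps)
  finally have rem: "\<bar>u powr b - (s\<^sup>2) powr b - b * (s\<^sup>2) powr (b - 1) * (u - s\<^sup>2)\<bar>
      \<le> 9 * c * s powr (\<beta> - 2) * (norm y)\<^sup>2"
    using powr_taylor_on_annulus[OF b s u(1,2)] by (simp add: c_def)
  have "0 < u" using s u(1) by (smt (verit) zero_less_power divide_pos_pos)
  then have "norm (x + y) powr \<beta> = u powr b" "norm x powr \<beta> = (s\<^sup>2) powr b"
    using s power2_powr[of "norm (x + y)" b] power2_powr[of s b]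
    by (auto simp: u_def s_def b_def)
  moreover have "b * (s\<^sup>2) powr (b - 1) * (u - s\<^sup>2)
      = \<beta> * norm x powr (\<beta> - 2) * inner x y + b * s powr (\<beta> - 2) * (norm y)\<^sup>2"
  proof -
    have "u - s\<^sup>2 = 2 * inner x y + (norm y)\<^sup>2"
      by (simp add: u_def s_def power2_norm_eq_inner inner_add algebra_simps inner_commute)
    then show ?thesis using s by (simp add: power2_powr b_def s_def algebra_simps)
  qed
  moreover have "0 \<le> b * s powr (\<beta> - 2) * (norm y)\<^sup>2" using b by simp
  ultimately show "\<bar>norm (x + y) powr \<beta> - norm x powr \<beta> - \<beta> * norm x powr (\<beta> - 2) * inner x y\<bar>
      \<le> (9 * c + b) * norm x powr (\<beta> - 2) * (norm y)\<^sup>2"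
    using rem by (simp add: s_def algebra_simps abs_le_iff)
qed

section \<open>Estimates of the lattice sum\<close>

lemma powr_diff_le:
  fixes u v b :: real
  assumes uv: "0 \<le> u" "u \<le> v" and b: "1 \<le> b"
  shows "v powr b - u powr b \<le> b * v powr (b - 1) * (v - u)"
proof (cases "u = 0")
  case True
  have "v powr b = v powr (b - 1) * v powr 1" by (subst powr_add[symmetric]) simp
  also have "\<dots> = v powr (b - 1) * v" using uv by simp
  also have "\<dots> \<le> b * v powr (b - 1) * v"
    using uv b by (intro mult_right_mono) (simp_all add: mult_le_cancel_right1)
  finally show ?thesis using True b by simp
next
  case False
  then have "norm (v powr b - u powr b) \<le> b * v powr (b - 1) * norm (v - u)"
    using uv b by (intro field_differentiable_bound[of "{u..v}" "\<lambda>t. t powr b" "\<lambda>t. b * t powr (b - 1)"])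
      (auto intro!: has_field_derivative_at_within[OF has_real_derivative_powr] powr_mono2 mult_left_mono)
  then show ?thesis using uv by simp
qed

lemma norm_powr_diff_le:
  fixes x y :: "'a::real_normed_vector"
  assumes \<beta>: "\<beta> \<ge> 1" and y: "norm y \<le> r"
  shows "\<bar>norm (x + y) powr \<beta> - norm x powr \<beta>\<bar> \<le> \<beta> * (norm x + r) powr (\<beta> - 1) * r"
proof -
  have *: "v powr \<beta> - u powr \<beta> \<le> \<beta> * (norm x + r) powr (\<beta> - 1) * r"
    if "0 \<le> u" "u \<le> v" "v \<le> norm x + r" "v - u \<le> r" for u v
  proof -
    have "v powr \<beta> - u powr \<beta> \<le> \<beta> * v powr (\<beta> - 1) * (v - u)"
      using that \<beta> by (intro powr_diff_le) auto
    also have "\<dots> \<le> \<beta> * (norm x + r) powr (\<beta> - 1) * r"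
      using that \<beta> by (intro mult_mono powr_mono2) auto
    finally show ?thesis .
  qed
  have "norm (x + y) \<le> norm x + r" "\<bar>norm (x + y) - norm x\<bar> \<le> r" "norm x \<le> norm x + r"
    using norm_triangle_ineq[of x y] norm_triangle_ineq3[of "x + y" x] y norm_ge_zero[of y] by auto
  then show ?thesis
    using *[of "norm x" "norm (x + y)"] *[of "norm (x + y)" "norm x"] \<beta>
      powr_mono2[of \<beta> "norm x" "norm (x + y)"] powr_mono2[of \<beta> "norm (x + y)" "norm x"]
    by (cases "norm x \<le> norm (x + y)") (auto simp: abs_le_iff)
qed

lemma abs_sum_Jp_norm_powr_diff_le:
  fixes x :: "real^'n::finite"
  assumes p: "1 < p" and \<beta>: "1 \<le> \<beta>" and h: "0 < h" "h \<le> r"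
  shows "h ^ CARD('n) * \<bar>\<Sum>y\<in>grid h \<inter> ball 0 r. Jp p (norm (x + y) powr \<beta> - norm x powr \<beta>)\<bar>
           \<le> (3 * r) ^ CARD('n) * (\<beta> * (norm x + r) powr (\<beta> - 1) * r) powr (p - 1)"
proof -
  let ?S = "grid h \<inter> ball (0::real^'n) r"
  let ?M = "(\<beta> * (norm x + r) powr (\<beta> - 1) * r) powr (p - 1)"
  have "\<bar>\<Sum>y\<in>?S. Jp p (norm (x + y) powr \<beta> - norm x powr \<beta>)\<bar> \<le> (\<Sum>y\<in>?S. ?M)"
  proof (rule order_trans[OF sum_abs sum_mono])
    fix y assume "y \<in> ?S"
    then show "\<bar>Jp p (norm (x + y) powr \<beta> - norm x powr \<beta>)\<bar> \<le> ?M"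
      unfolding Jp_abs using p norm_powr_diff_le[OF \<beta>, of y r x] by (intro powr_mono2) auto
  qed
  then have "h ^ CARD('n) * \<bar>\<Sum>y\<in>?S. Jp p (norm (x + y) powr \<beta> - norm x powr \<beta>)\<bar>
      \<le> (h ^ CARD('n) * real (card ?S)) * ?M"
    using h by (simp add: mult_left_mono mult.assoc)
  also have "\<dots> \<le> (3 * r) ^ CARD('n) * ?M"
    using card_grid_ball_scaled_le[OF h] by (intro mult_right_mono) auto
  finally show ?thesis .
qed

lemma abs_sum_Jp_le_osc:
  fixes a :: "real^'n::finite \<Rightarrow> real"
  assumes p: "1 < p" "p < 2" and E: "E > 0" and h: "h > 0"
    and a: "\<And>y. y \<in> grid h \<inter> ball 0 r \<Longrightarrow> \<bar>a y - inner g y\<bar> \<le> E"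
  shows "2 * \<bar>\<Sum>y\<in>grid h \<inter> ball 0 r. Jp p (a y)\<bar>
           \<le> (\<Sum>k\<in>int_box (nat \<lfloor>r / h\<rfloor>). Jp_osc p E (inner g (lattice_point h k)))"
proof -
  let ?S = "grid h \<inter> ball (0::real^'n) r"
  have "2 * (\<Sum>y\<in>?S. Jp p (a y)) = (\<Sum>y\<in>?S. Jp p (a y)) + (\<Sum>y\<in>?S. Jp p (a (- y)))"
    using sum_grid_ball_reflect[of "\<lambda>y. Jp p (a y)"] by simp
  also have "\<dots> = (\<Sum>y\<in>?S. Jp p (a y) - Jp p (- a (- y)))"
    by (simp add: sum.distrib Jp_minus)
  finally have "2 * \<bar>\<Sum>y\<in>?S. Jp p (a y)\<bar> = \<bar>\<Sum>y\<in>?S. Jp p (a y) - Jp p (- a (- y))\<bar>"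
    by (metis abs_mult abs_numeral)
  also have "\<dots> \<le> (\<Sum>y\<in>?S. \<bar>Jp p (a y) - Jp p (- a (- y))\<bar>)"
    by (rule sum_abs)
  also have "\<dots> \<le> (\<Sum>y\<in>?S. Jp_osc p E (inner g y))"
  proof (intro sum_mono Jp_diff_le_osc[OF p E])
    fix y assume y: "y \<in> ?S"
    show "\<bar>a y - inner g y\<bar> \<le> E" using a[OF y] .
    show "\<bar>- a (- y) - inner g y\<bar> \<le> E"
      using a[OF uminus_in_grid_ball[OF y]] by (simp add: abs_minus_commute)
  qed
  also have "\<dots> \<le> (\<Sum>k\<in>int_box (nat \<lfloor>r / h\<rfloor>). Jp_osc p E (inner g (lattice_point h k)))"
    using Jp_osc_nonneg[OF E] by (intro sum_grid_ball_le_int_box[OF h])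
  finally show ?thesis .
qed

lemma norm_le_card_mult_component:
  fixes g :: "real^'n::finite"
  obtains i where "norm g \<le> CARD('n) * \<bar>g $ i\<bar>"
proof -
  have "Max (range (\<lambda>j. \<bar>g $ j\<bar>)) \<in> range (\<lambda>j. \<bar>g $ j\<bar>)" by (intro Max_in) auto
  then obtain i where "\<bar>g $ i\<bar> = Max (range (\<lambda>j. \<bar>g $ j\<bar>))" by (metis rangeE)
  then have "\<bar>g $ j\<bar> \<le> \<bar>g $ i\<bar>" for j by simp
  then have "(\<Sum>j\<in>UNIV. \<bar>g $ j\<bar>) \<le> CARD('n) * \<bar>g $ i\<bar>"
    using sum_bounded_above[of UNIV "\<lambda>j. \<bar>g $ j\<bar>"] by simp
  then show thesis using norm_le_l1_cart[of g] by (intro that[of i]) linarith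
qed

lemma sum_int_box_Jp_osc_le:
  fixes g :: "real^'n::finite" and N :: nat
  assumes p: "1 < p" "p < 2" and E: "E > 0" and h: "h > 0" and g: "g \<noteq> 0"
  defines "X \<equiv> real (2 * N + 1)"
  shows "(\<Sum>k\<in>int_box N. Jp_osc p E (inner g (lattice_point h k)))
           \<le> X ^ (CARD('n) - 1) * (6 * E powr (p - 1)
                 + 24 * E * (h * norm g / (2 * CARD('n))) powr (p - 2) * X powr (p - 1) / (p - 1))"
proof -
  obtain i where gi: "norm g \<le> CARD('n) * \<bar>g $ i\<bar>" by (rule norm_le_card_mult_component)
  define \<sigma> where "\<sigma> = h * g $ i"
  have pos: "0 < h * norm g / (2 * CARD('n))" using h g by simp
  moreover have le: "h * norm g / (2 * CARD('n)) \<le> \<bar>\<sigma>\<bar> / 2"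
    using gi h by (simp add: \<sigma>_def abs_mult field_simps)
  ultimately have \<sigma>_le: "(\<bar>\<sigma>\<bar> / 2) powr (p - 2) \<le> (h * norm g / (2 * CARD('n))) powr (p - 2)"
    using p by (intro powr_mono2') auto
  from pos le have "0 < \<bar>\<sigma>\<bar> / 2" by linarith
  then have \<sigma>: "\<sigma> \<noteq> 0" by simp
  have line: "(\<Sum>m\<in>{- int N..int N}. Jp_osc p E (c + \<sigma> * of_int m))
      \<le> 6 * E powr (p - 1) + 24 * E * (h * norm g / (2 * CARD('n))) powr (p - 2) * X powr (p - 1) / (p - 1)"
    for c
  proof -
    have "(\<Sum>m\<in>{- int N..int N}. Jp_osc p E (c + \<sigma> * of_int m))
        \<le> 6 * E powr (p - 1) + 2 * (12 * E) * (\<bar>\<sigma>\<bar> / 2) powr (p - 2) * X powr (p - 1) / (p - 1)"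
      unfolding X_def using E Jp_osc_nonneg[OF E] Jp_osc_le_const[OF p E] Jp_osc_le_powr[OF p E]
      by (intro sum_lattice_line_le[OF p \<sigma>]) auto
    also have "\<dots> \<le> 6 * E powr (p - 1) + 24 * E * (h * norm g / (2 * CARD('n))) powr (p - 2) * X powr (p - 1) / (p - 1)"
      using \<sigma>_le E p by (intro add_left_mono divide_right_mono mult_right_mono) (auto simp: X_def)
    finally show ?thesis .
  qed
  have "(\<Sum>k\<in>int_box N. Jp_osc p E (inner g (lattice_point h k)))
      = (\<Sum>k\<in>{k \<in> int_box N. k i = 0}. \<Sum>m\<in>{- int N..int N}.
           Jp_osc p E (inner g (lattice_point h k) + \<sigma> * of_int m))"
    unfolding sum_int_box_split[of _ N i] by (intro sum.cong refl) (simp add: inner_lattice_point_upd \<sigma>_def)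
  also have "\<dots> \<le> (\<Sum>k\<in>{k \<in> int_box N. k i = 0}.
      6 * E powr (p - 1) + 24 * E * (h * norm g / (2 * CARD('n))) powr (p - 2) * X powr (p - 1) / (p - 1))"
    by (intro sum_mono line)
  finally show ?thesis by (simp add: card_int_box_slice X_def)
qed

lemma power_powr_rescale_le:
  fixes h X R A B q p :: real and d :: nat
  assumes h: "0 < h" "0 \<le> X" "h * X \<le> R" and AB: "0 \<le> A" "0 \<le> B" "0 \<le> q" and p: "1 < p" and d: "1 \<le> d"
  shows "h ^ d * (X ^ (d - 1) * (A + B * (h * q) powr (p - 2) * X powr (p - 1)))
           \<le> R ^ (d - 1) * (h * A + B * q powr (p - 2) * R powr (p - 1))"
proof -
  have "h ^ d = h * h ^ (d - 1)" using d by (simp add: power_eq_if)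
  moreover have "h * (h * q) powr (p - 2) * X powr (p - 1) = q powr (p - 2) * (h * X) powr (p - 1)"
    using h AB by (simp add: powr_mult powr_mult_base)
  ultimately have "h ^ d * (X ^ (d - 1) * (A + B * (h * q) powr (p - 2) * X powr (p - 1)))
      = (h * X) ^ (d - 1) * (h * A + B * q powr (p - 2) * (h * X) powr (p - 1))"
    by (simp add: power_mult_distrib algebra_simps)
  also have "\<dots> \<le> R ^ (d - 1) * (h * A + B * q powr (p - 2) * R powr (p - 1))"
  proof -
    have "B * q powr (p - 2) * (h * X) powr (p - 1) \<le> B * q powr (p - 2) * R powr (p - 1)"
      using h AB p by (intro mult_left_mono powr_mono2) auto
    moreover have "(h * X) ^ (d - 1) \<le> R ^ (d - 1)" using h by (intro power_mono) auto
    moreover have "0 \<le> R" using h by (meson mult_nonneg_nonneg less_imp_le order_trans)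
    ultimately show ?thesis using h AB by (intro mult_mono[OF _ add_left_mono]) auto
  qed
  finally show ?thesis .
qed

lemma abs_sum_Jp_norm_powr_diff_le_far:
  fixes x :: "real^'n::finite"
  assumes p: "1 < p" "p < 2" and \<beta>: "\<beta> > 2" and K: "K > 0"
    and taylor: "\<And>y::real^'n. norm y \<le> norm x / 2 \<Longrightarrow>
      \<bar>norm (x + y) powr \<beta> - norm x powr \<beta> - \<beta> * norm x powr (\<beta> - 2) * inner x y\<bar>
        \<le> K * norm x powr (\<beta> - 2) * (norm y)\<^sup>2"
    and h: "0 < h" "h \<le> r" and rx: "r \<le> norm x / 2"
  defines "E \<equiv> K * norm x powr (\<beta> - 2) * r\<^sup>2"
    and "q \<equiv> \<beta> * norm x powr (\<beta> - 1) / (2 * real CARD('n))"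
  shows "h ^ CARD('n) * \<bar>\<Sum>y\<in>grid h \<inter> ball 0 r. Jp p (norm (x + y) powr \<beta> - norm x powr \<beta>)\<bar>
           \<le> (3 * r) ^ (CARD('n) - 1) * (3 * h * E powr (p - 1) + 12 / (p - 1) * E * q powr (p - 2) * (3 * r) powr (p - 1))"
proof -
  define g where "g = (\<beta> * norm x powr (\<beta> - 2)) *\<^sub>R x"
  define X where "X = real (2 * nat \<lfloor>r / h\<rfloor> + 1)"
  have x: "norm x > 0" using h rx by linarith
  have E: "E > 0" using K x h by (simp add: E_def)
  have "norm x * norm x powr (\<beta> - 2) = norm x powr (\<beta> - 1)"
    using x by (simp add: powr_mult_base)
  then have ng: "norm g = \<beta> * norm x powr (\<beta> - 1)"
    using \<beta> by (simp add: g_def abs_mult mult_ac)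
  then have g: "g \<noteq> 0" using \<beta> x by auto
  have "\<bar>(norm (x + y) powr \<beta> - norm x powr \<beta>) - inner g y\<bar> \<le> E"
    if "y \<in> grid h \<inter> ball 0 r" for y
  proof -
    have "norm y \<le> r" using that by simp
    then have "K * norm x powr (\<beta> - 2) * (norm y)\<^sup>2 \<le> E"
      unfolding E_def using K by (intro mult_left_mono power_mono) auto
    with taylor[of y] \<open>norm y \<le> r\<close> rx show ?thesis by (simp add: g_def mult.assoc)
  qed
  then have "2 * \<bar>\<Sum>y\<in>grid h \<inter> ball 0 r. Jp p (norm (x + y) powr \<beta> - norm x powr \<beta>)\<bar>
      \<le> X ^ (CARD('n) - 1) * (6 * E powr (p - 1) + 24 * E * (h * q) powr (p - 2) * X powr (p - 1) / (p - 1))"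
    using abs_sum_Jp_le_osc[OF p E h(1)] sum_int_box_Jp_osc_le[OF p E h(1) g, of "nat \<lfloor>r / h\<rfloor>"]
    by (force simp: X_def q_def ng mult.assoc)
  moreover have "X ^ (CARD('n) - 1) * (6 * E powr (p - 1) + 24 * E * (h * q) powr (p - 2) * X powr (p - 1) / (p - 1))
      = 2 * (X ^ (CARD('n) - 1) * (3 * E powr (p - 1) + 12 / (p - 1) * E * (h * q) powr (p - 2) * X powr (p - 1)))"
    using p by (simp add: field_simps)
  ultimately have "\<bar>\<Sum>y\<in>grid h \<inter> ball 0 r. Jp p (norm (x + y) powr \<beta> - norm x powr \<beta>)\<bar>
      \<le> X ^ (CARD('n) - 1) * (3 * E powr (p - 1) + 12 / (p - 1) * E * (h * q) powr (p - 2) * X powr (p - 1))"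
    by linarith
  then have "h ^ CARD('n) * \<bar>\<Sum>y\<in>grid h \<inter> ball 0 r. Jp p (norm (x + y) powr \<beta> - norm x powr \<beta>)\<bar>
      \<le> h ^ CARD('n) * (X ^ (CARD('n) - 1) * (3 * E powr (p - 1) + 12 / (p - 1) * E * (h * q) powr (p - 2) * X powr (p - 1)))"
    using h by (intro mult_left_mono) auto
  also have "\<dots> \<le> (3 * r) ^ (CARD('n) - 1) * (h * (3 * E powr (p - 1)) + 12 / (p - 1) * E * q powr (p - 2) * (3 * r) powr (p - 1))"
    using grid_radius_scaled_le[OF h] h E p \<beta> x
    by (intro power_powr_rescale_le) (auto simp: X_def q_def)
  finally show ?thesis by (simp add: algebra_simps)
qed

lemma abs_discrete_pLap:
  fixes x :: "real^'n::finite"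
  assumes "0 < h" "0 < r"
  shows "\<bar>discrete_pLap p h r \<phi> x\<bar> = \<bar>1 / (Ddp TYPE('n) p * omega TYPE('n))\<bar>
           * (h ^ CARD('n) * \<bar>\<Sum>y\<in>grid h \<inter> ball 0 r. Jp p (\<phi> (x + y) - \<phi> x)\<bar> / r powr (p + CARD('n)))"
  using assms by (simp add: discrete_pLap_def abs_mult abs_divide)

lemma near_center_rescaling:
  fixes r \<beta> \<theta> p :: real
  assumes "0 < r" "0 < \<beta>"
  shows "(3 * r) ^ d * (\<beta> * (2 * r powr \<theta>) powr (\<beta> - 1) * r) powr (p - 1) / r powr (p + d)
           = 3 ^ d * \<beta> powr (p - 1) * 2 powr ((\<beta> - 1) * (p - 1)) * r powr ((\<beta> - 1) * (p - 1) * \<theta> - 1)"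
    (is "?A = ?B")
proof -
  have "ln ?A = ln ?B" using assms by (simp add: ln_mult_pos ln_divide_pos ln_realpow algebra_simps)
  then show ?thesis using assms by simp
qed

lemma far_from_center_rescaling:
  fixes r h s K \<beta> p :: real and d :: nat
  assumes "0 < r" "0 < h" "0 < s" "0 < K" "0 < \<beta>" "1 < p" "1 \<le> d"
  shows "(3 * r) ^ (d - 1) * (3 * h * (K * s powr (\<beta> - 2) * r\<^sup>2) powr (p - 1)) / r powr (p + d)
           = 3 ^ d * K powr (p - 1) * s powr ((\<beta> - 2) * (p - 1)) * (h * r powr (p - 3))"
      (is "?A1 = ?B1")
    and "(3 * r) ^ (d - 1) * ((K * s powr (\<beta> - 2) * r\<^sup>2)
             * (\<beta> * s powr (\<beta> - 1) / (2 * d)) powr (p - 2) * (3 * r) powr (p - 1)) / r powr (p + d)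
           = 3 powr (d + p - 2) * K * (\<beta> / (2 * d)) powr (p - 2) * s powr ((\<beta> - 1) * (p - 1) - 1)"
      (is "?A2 = ?B2")
proof -
  have d: "real (d - 1) = real d - 1" using assms by (simp add: of_nat_diff)
  have "ln ?A1 = ln ?B1" "ln ?A2 = ln ?B2"
    using assms by (simp_all add: ln_mult_pos ln_divide_pos ln_realpow d algebra_simps)
  then show "?A1 = ?B1" "?A2 = ?B2" using assms by simp_all
qed

lemma discrete_pLap_norm_powr_near_center:
  fixes x :: "real^'n::finite" and p \<beta> :: real
  assumes p: "1 < p" and \<beta>: "1 \<le> \<beta>" and h: "0 < h" "h \<le> r" and x: "norm x + r \<le> 2 * r powr \<theta>"
  shows "\<bar>discrete_pLap p h r (\<lambda>z. norm z powr \<beta>) x\<bar>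
           \<le> \<bar>1 / (Ddp TYPE('n) p * omega TYPE('n))\<bar> * 3 ^ CARD('n) * \<beta> powr (p - 1)
               * 2 powr ((\<beta> - 1) * (p - 1)) * r powr ((\<beta> - 1) * (p - 1) * \<theta> - 1)"
proof -
  have r: "0 < r" using h by linarith
  have "(\<beta> * (norm x + r) powr (\<beta> - 1) * r) powr (p - 1) \<le> (\<beta> * (2 * r powr \<theta>) powr (\<beta> - 1) * r) powr (p - 1)"
    using x p \<beta> r by (intro powr_mono2 mult_right_mono mult_left_mono) auto
  then have "h ^ CARD('n) * \<bar>\<Sum>y\<in>grid h \<inter> ball 0 r. Jp p (norm (x + y) powr \<beta> - norm x powr \<beta>)\<bar>
      \<le> (3 * r) ^ CARD('n) * (\<beta> * (2 * r powr \<theta>) powr (\<beta> - 1) * r) powr (p - 1)"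
    using abs_sum_Jp_norm_powr_diff_le[OF p \<beta> h, of x] r by (smt (verit) mult_left_mono zero_le_power)
  then have "\<bar>discrete_pLap p h r (\<lambda>z. norm z powr \<beta>) x\<bar> \<le> \<bar>1 / (Ddp TYPE('n) p * omega TYPE('n))\<bar>
      * ((3 * r) ^ CARD('n) * (\<beta> * (2 * r powr \<theta>) powr (\<beta> - 1) * r) powr (p - 1) / r powr (p + CARD('n)))"
    unfolding abs_discrete_pLap[OF h(1) r] by (intro divide_right_mono mult_left_mono) auto
  also have "\<dots> = \<bar>1 / (Ddp TYPE('n) p * omega TYPE('n))\<bar> * (3 ^ CARD('n) * \<beta> powr (p - 1)
      * 2 powr ((\<beta> - 1) * (p - 1)) * r powr ((\<beta> - 1) * (p - 1) * \<theta> - 1))"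
    using \<beta> by (subst near_center_rescaling[OF r]) auto
  finally show ?thesis by (simp only: mult.assoc)
qed

lemma discrete_pLap_norm_powr_far_from_center:
  fixes x :: "real^'n::finite" and p \<beta> :: real
  assumes p: "1 < p" "p < 2" and \<beta>: "\<beta> > 2" and K: "K > 0"
    and taylor: "\<And>y::real^'n. norm y \<le> norm x / 2 \<Longrightarrow>
      \<bar>norm (x + y) powr \<beta> - norm x powr \<beta> - \<beta> * norm x powr (\<beta> - 2) * inner x y\<bar>
        \<le> K * norm x powr (\<beta> - 2) * (norm y)\<^sup>2"
    and h: "0 < h" "h \<le> r" and rx: "r \<le> norm x / 2"
  shows "\<bar>discrete_pLap p h r (\<lambda>z. norm z powr \<beta>) x\<bar>
           \<le> \<bar>1 / (Ddp TYPE('n) p * omega TYPE('n))\<bar>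
               * (3 ^ CARD('n) * K powr (p - 1) * norm x powr ((\<beta> - 2) * (p - 1)) * (h * r powr (p - 3))
                  + 12 / (p - 1) * 3 powr (CARD('n) + p - 2) * K * (\<beta> / (2 * real CARD('n))) powr (p - 2)
                      * norm x powr ((\<beta> - 1) * (p - 1) - 1))"
proof -
  let ?E = "K * norm x powr (\<beta> - 2) * r\<^sup>2" and ?q = "\<beta> * norm x powr (\<beta> - 1) / (2 * real CARD('n))"
  have r: "0 < r" and x: "0 < norm x" using h rx by linarith+
  have "h ^ CARD('n) * \<bar>\<Sum>y\<in>grid h \<inter> ball 0 r. Jp p (norm (x + y) powr \<beta> - norm x powr \<beta>)\<bar>
      \<le> (3 * r) ^ (CARD('n) - 1) * (3 * h * ?E powr (p - 1) + 12 / (p - 1) * ?E * ?q powr (p - 2) * (3 * r) powr (p - 1))"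
    by (rule abs_sum_Jp_norm_powr_diff_le_far[OF p \<beta> K _ h rx]) (rule taylor)
  then have "\<bar>discrete_pLap p h r (\<lambda>z. norm z powr \<beta>) x\<bar> \<le> \<bar>1 / (Ddp TYPE('n) p * omega TYPE('n))\<bar>
      * ((3 * r) ^ (CARD('n) - 1) * (3 * h * ?E powr (p - 1) + 12 / (p - 1) * ?E * ?q powr (p - 2) * (3 * r) powr (p - 1))
      / r powr (p + CARD('n)))"
    unfolding abs_discrete_pLap[OF h(1) r] by (intro divide_right_mono mult_left_mono) auto
  also have "\<dots> = \<bar>1 / (Ddp TYPE('n) p * omega TYPE('n))\<bar>
      * ((3 * r) ^ (CARD('n) - 1) * (3 * h * ?E powr (p - 1)) / r powr (p + CARD('n))
         + 12 / (p - 1) * ((3 * r) ^ (CARD('n) - 1) * (?E * ?q powr (p - 2) * (3 * r) powr (p - 1)) / r powr (p + CARD('n))))"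
    by (simp add: add_divide_distrib distrib_left mult_ac)
  also have "\<dots> = \<bar>1 / (Ddp TYPE('n) p * omega TYPE('n))\<bar>
      * (3 ^ CARD('n) * K powr (p - 1) * norm x powr ((\<beta> - 2) * (p - 1)) * (h * r powr (p - 3))
         + 12 / (p - 1) * (3 powr (CARD('n) + p - 2) * K * (\<beta> / (2 * real CARD('n))) powr (p - 2)
             * norm x powr ((\<beta> - 1) * (p - 1) - 1)))"
    using \<beta> p far_from_center_rescaling[OF r h(1) x K, of \<beta> p "CARD('n)"] by simp
  finally show ?thesis by (simp only: mult.assoc)
qed

lemma conjugate_exponent_gt_one:
  fixes p \<beta> :: real
  assumes "1 < p" "\<beta> > p / (p - 1)"
  shows "(\<beta> - 1) * (p - 1) > 1"
proof -
  have "\<beta> * (p - 1) > p" using assms by (simp add: field_simps)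
  then show ?thesis by (simp add: algebra_simps)
qed

lemma discrete_pLap_norm_powr_bound:
  fixes p \<beta> :: real
  assumes p: "1 < p" "p < 2" and \<beta>: "\<beta> > p / (p - 1)"
  defines "\<gamma> \<equiv> (\<beta> - 1) * (p - 1)"
  obtains C where "\<And>h r (x::real^'n::finite). 0 < h \<Longrightarrow> h \<le> r \<Longrightarrow> r \<le> 1 \<Longrightarrow>
      r powr ((\<gamma> - 1) / (2 * \<gamma>)) \<le> 1/2 \<Longrightarrow> norm x \<le> 1 \<Longrightarrow>
      \<bar>discrete_pLap p h r (\<lambda>z. norm z powr \<beta>) x\<bar>
        \<le> C * (r powr ((\<gamma> - 1) / 2) + h * r powr (p - 3) + norm x powr (\<gamma> - 1))"
proof -
  have "p / (p - 1) > 2" using p by (simp add: field_simps)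
  then have \<beta>2: "\<beta> > 2" using \<beta> by simp
  have \<gamma>: "\<gamma> > 1" unfolding \<gamma>_def using p(1) \<beta> by (rule conjugate_exponent_gt_one)
  define \<theta> where "\<theta> = (\<gamma> + 1) / (2 * \<gamma>)"
  have \<theta>: "\<theta> \<le> 1" "1 - \<theta> = (\<gamma> - 1) / (2 * \<gamma>)" "\<gamma> * \<theta> - 1 = (\<gamma> - 1) / 2"
    using \<gamma> by (simp_all add: \<theta>_def field_simps)
  obtain K where K: "K > 0" and taylor: "\<And>x y :: real^'n. norm x > 0 \<Longrightarrow> norm y \<le> norm x / 2 \<Longrightarrow>
      \<bar>norm (x + y) powr \<beta> - norm x powr \<beta> - \<beta> * norm x powr (\<beta> - 2) * inner x y\<bar>
        \<le> K * norm x powr (\<beta> - 2) * (norm y)\<^sup>2"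
    using norm_powr_second_order[OF \<beta>2] by blast
  define C0 where "C0 = \<bar>1 / (Ddp TYPE('n) p * omega TYPE('n))\<bar>"
  define C1 where "C1 = C0 * 3 ^ CARD('n) * \<beta> powr (p - 1) * 2 powr \<gamma>"
  define C2 where "C2 = C0 * 3 ^ CARD('n) * K powr (p - 1)"
  define C3 where "C3 = C0 * (12 / (p - 1) * 3 powr (CARD('n) + p - 2) * K * (\<beta> / (2 * real CARD('n))) powr (p - 2))"
  have C: "0 \<le> C1" "0 \<le> C2" "0 \<le> C3" using p K by (simp_all add: C0_def C1_def C2_def C3_def)
  show ?thesis
  proof (rule that[of "C1 + C2 + C3"])
    fix h r and x :: "real^'n"
    assume h: "0 < h" "h \<le> r" and r: "r \<le> 1" "r powr ((\<gamma> - 1) / (2 * \<gamma>)) \<le> 1/2" and x: "norm x \<le> 1"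
    let ?a = "r powr ((\<gamma> - 1) / 2)" and ?b = "h * r powr (p - 3)" and ?c = "norm x powr (\<gamma> - 1)"
    have abc: "0 \<le> ?a" "0 \<le> ?b" "0 \<le> ?c" using h by auto
    have "\<bar>discrete_pLap p h r (\<lambda>z. norm z powr \<beta>) x\<bar> \<le> C1 * ?a + C2 * ?b + C3 * ?c"
    proof (cases "norm x \<le> r powr \<theta>")
      case True
      have "r \<le> r powr \<theta>" using powr_mono'[OF \<theta>(1), of r] h r by simp
      then have "norm x + r \<le> 2 * r powr \<theta>" using True by simp
      from discrete_pLap_norm_powr_near_center[OF p(1) _ h this, of \<beta>] \<beta>2
      have "\<bar>discrete_pLap p h r (\<lambda>z. norm z powr \<beta>) x\<bar> \<le> C1 * ?a"
        unfolding C1_def C0_def \<gamma>_def[symmetric] \<theta>(3) by simp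
      then show ?thesis using C abc by (smt (verit) mult_nonneg_nonneg)
    next
      case False
      have "r = r powr \<theta> * r powr (1 - \<theta>)" using h by (simp add: powr_add[symmetric])
      also have "\<dots> \<le> r powr \<theta> * (1/2)" using r \<theta>(2) by (intro mult_left_mono) auto
      finally have rx: "r \<le> norm x / 2" using False by simp
      then have "0 < norm x" using h by linarith
      then have "norm x powr ((\<beta> - 2) * (p - 1)) \<le> 1" using x \<beta>2 p by (intro powr_le1) auto
      then have "C2 * (norm x powr ((\<beta> - 2) * (p - 1)) * ?b) \<le> C2 * ?b"
        using C abc by (intro mult_left_mono) (auto intro: mult_left_le_one_le)
      moreover have "\<bar>discrete_pLap p h r (\<lambda>z. norm z powr \<beta>) x\<bar>
          \<le> C2 * (norm x powr ((\<beta> - 2) * (p - 1)) * ?b) + C3 * ?c"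
        using discrete_pLap_norm_powr_far_from_center[OF p \<beta>2 K taylor[OF \<open>0 < norm x\<close>] h rx]
        by (simp add: C0_def C2_def C3_def \<gamma>_def algebra_simps)
      ultimately show ?thesis using C abc by (smt (verit) mult_nonneg_nonneg)
    qed
    also have "\<dots> \<le> (C1 + C2 + C3) * (?a + ?b + ?c)"
      using C abc by (simp add: algebra_simps add_increasing)
    finally show "\<bar>discrete_pLap p h r (\<lambda>z. norm z powr \<beta>) x\<bar> \<le> (C1 + C2 + C3) * (?a + ?b + ?c)" .
  qed
qed

section \<open>Passage to the limit\<close>

lemma tendsto_powr_at_right_0: "e > 0 \<Longrightarrow> ((\<lambda>r::real. r powr e) \<longlongrightarrow> 0) (at_right 0)"
  by (rule tendsto_zero_powrI) (auto simp: eventually_at_right_less eventually_at_filter)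

lemma eventually_small_scale:
  fixes h :: "real \<Rightarrow> real"
  assumes hlim: "((\<lambda>r. h r / r powr q) \<longlongrightarrow> 0) (at_right 0)" and q: "q > 1" and e: "e > 0"
  shows "\<forall>\<^sub>F r in at_right 0. h r \<le> r \<and> r \<le> 1 \<and> r powr e \<le> 1/2"
proof -
  have "\<forall>\<^sub>F r in at_right (0::real). 0 < r \<and> r < 1"
    using eventually_at_right_real[of 0 1] by (auto elim: eventually_mono)
  moreover have "\<forall>\<^sub>F r in at_right 0. h r / r powr q < 1"
    using order_tendstoD(2)[OF hlim zero_less_one] .
  moreover have "\<forall>\<^sub>F r in at_right 0. r powr e < 1/2"
    using order_tendstoD(2)[OF tendsto_powr_at_right_0[OF e], of "1/2"] by simp
  ultimately show ?thesis
  proof eventually_elim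
    case (elim r)
    then have "h r < r powr q" by (simp add: field_simps)
    also have "r powr q \<le> r powr 1" using elim q by (intro powr_mono') auto
    finally show ?case using elim by simp
  qed
qed

lemma tendsto_mult_powr_at_right_0:
  fixes h :: "real \<Rightarrow> real"
  assumes hlim: "((\<lambda>r. h r / r powr q) \<longlongrightarrow> 0) (at_right 0)" and "q + a > 0"
  shows "((\<lambda>r. h r * r powr a) \<longlongrightarrow> 0) (at_right 0)"
proof -
  have "((\<lambda>r. h r / r powr q * r powr (q + a)) \<longlongrightarrow> 0 * 0) (at_right 0)"
    by (intro tendsto_mult hlim tendsto_powr_at_right_0 assms)
  moreover have "\<forall>\<^sub>F r in at_right 0. h r / r powr q * r powr (q + a) = h r * r powr a"
    using eventually_at_right_less[of 0] by eventually_elim (simp add: powr_add)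
  ultimately show ?thesis by (simp add: tendsto_cong)
qed

lemma filterlim_fst_at_right_0:
  fixes x0 :: "'a::topological_space"
  shows "filterlim fst (at_right 0) (at (0::real, x0) within ({0<..} \<times> UNIV))"
  unfolding filterlim_at
proof
  show "\<forall>\<^sub>F z in at (0::real, x0) within {0<..} \<times> UNIV. fst z \<in> {0<..} \<and> fst z \<noteq> 0"
    unfolding eventually_at_filter by (rule always_eventually) (auto simp: mem_Times_iff)
  show "(fst \<longlongrightarrow> 0) (at (0::real, x0) within {0<..} \<times> UNIV)"
    using tendsto_fst[OF tendsto_ident_at[of "(0::real, x0)" "{0<..} \<times> UNIV"]] by simp
qed

lemma tendsto_zero_of_scale_bound:
  fixes D :: "real \<Rightarrow> real^'n::finite \<Rightarrow> real" and h :: "real \<Rightarrow> real"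
  assumes hpos: "\<And>r. r > 0 \<Longrightarrow> h r > 0"
    and hlim: "((\<lambda>r. h r / r powr q) \<longlongrightarrow> 0) (at_right 0)"
    and exps: "q > 1" "q + a > 0" "b > 0" "c > 0" "e > 0"
    and bound: "\<And>r x. 0 < h r \<Longrightarrow> h r \<le> r \<Longrightarrow> r \<le> 1 \<Longrightarrow> r powr e \<le> 1/2 \<Longrightarrow> norm x \<le> 1 \<Longrightarrow>
      \<bar>D r x\<bar> \<le> C * (r powr b + h r * r powr a + norm x powr c)"
  shows "((\<lambda>(r, x). D r x) \<longlongrightarrow> 0) (at (0, 0) within ({0<..} \<times> UNIV))"
proof -
  let ?F = "at (0::real, 0::real^'n) within ({0<..} \<times> UNIV)"
  note fst = filterlim_fst_at_right_0[of "0::real^'n"]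
  have "(snd \<longlongrightarrow> (0::real^'n)) ?F"
    using tendsto_snd[OF tendsto_ident_at[of "(0::real, 0::real^'n)" "{0<..} \<times> UNIV"]] by simp
  then have snd: "((\<lambda>z. norm (snd z)) \<longlongrightarrow> 0) ?F" by (rule tendsto_norm_zero)
  define M where "M z = C * (fst z powr b + h (fst z) * fst z powr a + norm (snd z) powr c)"
    for z :: "real \<times> (real^'n)"
  have le_M: "\<forall>\<^sub>F z in ?F. \<bar>D (fst z) (snd z)\<bar> \<le> M z"
    using eventually_compose_filterlim[OF eventually_at_right_less fst]
      eventually_compose_filterlim[OF eventually_small_scale[OF hlim exps(1,5)] fst]
      order_tendstoD(2)[OF snd zero_less_one]
  proof eventually_elim
    case (elim z)
    then have "0 < fst z" "h (fst z) \<le> fst z" "fst z \<le> 1" "fst z powr e \<le> 1/2" "norm (snd z) \<le> 1"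
      by simp_all
    then show ?case unfolding M_def by (intro bound hpos)
  qed
  have "(M \<longlongrightarrow> 0) ?F"
    unfolding M_def
  proof (intro tendsto_mult_right_zero tendsto_add_zero)
    show "((\<lambda>z. fst z powr b) \<longlongrightarrow> 0) ?F"
      using filterlim_compose[OF tendsto_powr_at_right_0 fst] exps by simp
    show "((\<lambda>z. h (fst z) * fst z powr a) \<longlongrightarrow> 0) ?F"
      using filterlim_compose[OF tendsto_mult_powr_at_right_0[OF hlim exps(2)] fst] .
    show "((\<lambda>z. norm (snd z) powr c) \<longlongrightarrow> 0) ?F"
      using exps by (intro tendsto_zero_powrI[OF snd tendsto_const]) auto
  qed
  then have "((\<lambda>z. D (fst z) (snd z)) \<longlongrightarrow> 0) ?F"
    by (rule Lim_null_comparison[rotated]) (use le_M in simp)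
  then show ?thesis by (simp add: case_prod_unfold)
qed

theorem lemmaA3:
  fixes p \<beta> :: real and h :: "real \<Rightarrow> real"
  assumes "1 < p" "p < 2"
    and "\<And>r. r > 0 \<Longrightarrow> h r > 0"
    and "((\<lambda>r. h r / r powr (p / (p - 1))) \<longlongrightarrow> 0) (at_right 0)"
    and "\<beta> > p / (p - 1)"
  shows "((\<lambda>(r, x::real^'n). discrete_pLap p (h r) r (\<lambda>z. norm z powr \<beta>) x) \<longlongrightarrow> 0)
           (at (0, 0) within ({0<..} \<times> UNIV))"
proof -
  note p = assms(1,2) and \<beta> = assms(5)
  define \<gamma> where "\<gamma> = (\<beta> - 1) * (p - 1)"
  have \<gamma>: "\<gamma> > 1" unfolding \<gamma>_def using p(1) \<beta> by (rule conjugate_exponent_gt_one)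
  obtain C where bound: "\<And>h r (x::real^'n). 0 < h \<Longrightarrow> h \<le> r \<Longrightarrow> r \<le> 1 \<Longrightarrow>
      r powr ((\<gamma> - 1) / (2 * \<gamma>)) \<le> 1/2 \<Longrightarrow> norm x \<le> 1 \<Longrightarrow>
      \<bar>discrete_pLap p h r (\<lambda>z. norm z powr \<beta>) x\<bar>
        \<le> C * (r powr ((\<gamma> - 1) / 2) + h * r powr (p - 3) + norm x powr (\<gamma> - 1))"
    using discrete_pLap_norm_powr_bound[OF p \<beta>] unfolding \<gamma>_def by blast
  have "0 \<le> (p - 3/2)\<^sup>2" by simp
  then have "p / (p - 1) + (p - 3) > 0" using p by (simp add: field_simps power2_eq_square algebra_simps)
  moreover have "p / (p - 1) > 1" using p by (simp add: field_simps)
  moreover have "(\<gamma> - 1) / 2 > 0" "\<gamma> - 1 > 0" "(\<gamma> - 1) / (2 * \<gamma>) > 0" using \<gamma> by auto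
  ultimately show ?thesis by (intro tendsto_zero_of_scale_bound[OF assms(3,4) _ _ _ _ _ bound])
qed

end
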